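(* Fix $H$, $T$, an integer $A\ge2$ (number of actions at every information set), a number $X$ of max-player information sets with $(A^H-1)/(A-1)\le X<2(A^H-1)/(A-1)$, and $\delta\in(0,1/4)$; let $K=2A^H$ and assume $T\ge0.4K\log(1/(4\delta))$. There is a universal constant $c>0$ such that for any max-player algorithm there exists a game (horizon $H$, perfect recall, every max-player information set having exactly $A$ actions, $X$ max-player information sets, rewards in $[0,1]$, min-player actions irrelevant) such that with probability greater than $\delta$, $$\mathrm{Reg}^T_{\max}\ge c\sqrt{TA_{\mathcal X}\log(1/(4\delta))},\qquad A_{\mathcal X}=AX.$$ (If $X<(A^H-1)/(A-1)$, no such game exists.)
   Context: An episodic two-player zero-sum imperfect-information game with horizon $H$ and perfect recall: the max-player has information sets $\mathcal X=\bigsqcup_h\mathcal X_h$, each with action set of size $A$; every (information set, action) pair at depth $h<H$ is followed by at least one information set at depth $h+1$. Rewards $r_h\in[0,1]$ go to the max-player. A max-player algorithm is a sequence of measurable maps sending the observed history $(x^u_h,a^u_h,r^u_h)_{u<t,h\le H}$ to the policy $\mu^t$ used in episode $t$. With $V^{\mu,\nu}=\mathbb E^{\mu,\nu}[\sum_hr_h]$ and opponent policies $\nu^t$, $\mathrm{Reg}^T_{\max}=\max_{\mu^\dagger}\sum_{t=1}^T(V^{\mu^\dagger,\nu^t}-V^{\mu^t,\nu^t})$. *)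

theory Defs
  imports "HOL-Probability.Probability"
begin

text \<open>Max-player view of an episodic imperfect-information game in which the
min-player's actions are irrelevant.  Information sets are natural numbers,
actions at every information set are 0,...,A-1.  The field trn gives, for an
information set x and action a, the joint law of the reward r_h and the next
information set x_{h+1} (the second component is ignored at depth H).\<close>

record game =
  hor  :: nat
  nact :: nat
  infs :: "nat set"
  lvl  :: "nat \<Rightarrow> nat"
  par  :: "nat \<Rightarrow> nat \<times> nat"
  init :: "nat pmf"
  trn  :: "nat \<Rightarrow> nat \<Rightarrow> (real \<times> nat) pmf"

definition wf_game :: "game \<Rightarrow> bool" where
  "wf_game G \<longleftrightarrow>
     finite (infs G) \<and>
     (\<forall>x\<in>infs G. 1 \<le> lvl G x \<and> lvl G x \<le> hor G) \<and>
     set_pmf (init G) \<subseteq> {x\<in>infs G. lvl G x = 1} \<and>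
     \<comment> \<open>perfect recall: every infoset at depth h+1 has a unique predecessor pair at depth h\<close>
     (\<forall>y\<in>infs G. 2 \<le> lvl G y \<longrightarrow>
        fst (par G y) \<in> infs G \<and> lvl G (fst (par G y)) + 1 = lvl G y \<and> snd (par G y) < nact G) \<and>
     \<comment> \<open>every (infoset, action) pair at depth h < H is followed by some infoset at depth h+1\<close>
     (\<forall>x\<in>infs G. \<forall>a<nact G. lvl G x < hor G \<longrightarrow>
        (\<exists>y\<in>infs G. lvl G y = lvl G x + 1 \<and> par G y = (x, a))) \<and>
     \<comment> \<open>rewards in [0,1]; transitions respect the infoset tree\<close>
     (\<forall>x\<in>infs G. \<forall>a<nact G. \<forall>(r, y)\<in>set_pmf (trn G x a).
        0 \<le> r \<and> r \<le> 1 \<and>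
        (lvl G x < hor G \<longrightarrow> y \<in> infs G \<and> lvl G y = lvl G x + 1 \<and> par G y = (x, a)))"

type_synonym policy = "nat \<Rightarrow> nat pmf"
type_synonym traj = "(nat \<times> nat \<times> real) list"

definition policies :: "nat \<Rightarrow> policy set" where
  "policies A = {\<mu>. \<forall>x. set_pmf (\<mu> x) \<subseteq> {..<A}}"

primrec ep :: "game \<Rightarrow> policy \<Rightarrow> nat \<Rightarrow> nat \<Rightarrow> traj pmf" where
  "ep G \<mu> 0 x = return_pmf []"
| "ep G \<mu> (Suc n) x =
     bind_pmf (\<mu> x) (\<lambda>a. bind_pmf (trn G x a)
       (\<lambda>(r, y). map_pmf (Cons (x, a, r)) (ep G \<mu> n y)))"

definition episode :: "game \<Rightarrow> policy \<Rightarrow> traj pmf" where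
  "episode G \<mu> = bind_pmf (init G) (ep G \<mu> (hor G))"

definition val :: "game \<Rightarrow> policy \<Rightarrow> real" where
  "val G \<mu> = measure_pmf.expectation (episode G \<mu>) (\<lambda>\<tau>. sum_list (map (\<lambda>(x, a, r). r) \<tau>))"

text \<open>A (deterministic) max-player algorithm maps the observed history (list of
the previous episodes' trajectories) to the policy used in the next episode.\<close>
type_synonym algorithm = "traj list \<Rightarrow> policy"

primrec hist :: "game \<Rightarrow> algorithm \<Rightarrow> nat \<Rightarrow> traj list pmf" where
  "hist G alg 0 = return_pmf []"
| "hist G alg (Suc t) =
     bind_pmf (hist G alg t) (\<lambda>hs. map_pmf (\<lambda>\<tau>. hs @ [\<tau>]) (episode G (alg hs)))"

text \<open>Reg^T_max on a realised history hs (episode t+1 uses policy alg (take t hs)).\<close>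
definition regret :: "game \<Rightarrow> algorithm \<Rightarrow> nat \<Rightarrow> traj list \<Rightarrow> real" where
  "regret G alg T hs =
     Sup ((\<lambda>\<mu>. \<Sum>t<T. val G \<mu> - val G (alg (take t hs))) ` policies (nact G))"

end

theory Submission
  imports Defs
begin

text \<open>The hard games are complete \<open>A\<close>-ary trees of depth \<open>H\<close> whose \<open>K = A\<^sup>H\<close> leaf actions pay
  Bernoulli rewards; every episode visits exactly one leaf, so the game is a \<open>K\<close>-armed bandit.  In
  the base game every leaf pays \<open>1/2\<close> except one leaf \<open>l\<close> paying \<open>1/2 + D\<close>; raising a leaf
  \<open>j \<noteq> l\<close> to \<open>1/2 + 2D\<close> makes \<open>l\<close> suboptimal by \<open>D\<close>.  If under the base game the algorithm plays \<open>l\<close>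
  in at most half of the \<open>T\<close> episodes with probability \<open>> \<delta>\<close>, its regret there is \<open>\<ge> DT/2\<close>.
  Otherwise, by pigeonhole some \<open>j\<close> is visited at most \<open>m \<approx> 4T/K\<close> times with probability
  \<open>\<ge> 3/4\<close>.  The squared likelihood of a history under the base game is at most
  \<open>(1 - 16D\<^sup>2)\<^sup>-\<^sup>N\<close> (\<open>N\<close> the number of visits of \<open>j\<close>) times the product of its likelihoods with \<open>j\<close>
  raised and lowered by \<open>2D\<close>; by Cauchy-Schwarz the event "\<open>l\<close> is played often and \<open>j\<close> rarely"
  keeps probability \<open>\<ge> (1 - 16D\<^sup>2)\<^sup>m / 4 \<ge> \<delta>\<close> in the raised game, where it again costs \<open>DT/2\<close>.
  The choice \<open>D \<approx> \<surd>(K log(1/(4\<delta>)) / T)\<close> and \<open>A X \<le> 4K\<close> give the bound with \<open>c = 1/64\<close>.\<close>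

section \<open>Complete trees in breadth-first numbering\<close>

function node_depth :: "nat \<Rightarrow> nat \<Rightarrow> nat" where
  "node_depth A n = (if n = 0 then 1 else Suc (node_depth A ((n - 1) div A)))"
  by pat_completeness auto
termination
  by (relation "Wellfounded.measure snd") (auto intro: le_less_trans[OF div_le_dividend])

declare node_depth.simps[simp del]

lemma node_depth_0 [simp]: "node_depth A 0 = 1"
  by (simp add: node_depth.simps)

lemma node_depth_child [simp]: "a < A \<Longrightarrow> node_depth A (Suc (A * x + a)) = Suc (node_depth A x)"
  by (subst node_depth.simps) simp

lemma node_depth_parent: "n \<noteq> 0 \<Longrightarrow> node_depth A n = Suc (node_depth A ((n - 1) div A))"
  by (subst node_depth.simps) simp

lemma node_depth_ge_1: "1 \<le> node_depth A n"
  by (subst node_depth.simps) auto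

definition tree_size :: "nat \<Rightarrow> nat \<Rightarrow> nat" where
  "tree_size A h = (\<Sum>j<h. A ^ j)"

lemma tree_size_0 [simp]: "tree_size A 0 = 0"
  by (simp add: tree_size_def)

lemma tree_size_Suc: "tree_size A (Suc h) = A * tree_size A h + 1"
proof -
  have "(\<Sum>j<Suc h. A ^ j) = A ^ 0 + (\<Sum>j<h. A ^ Suc j)" by (rule sum.lessThan_Suc_shift)
  also have "\<dots> = 1 + A * (\<Sum>j<h. A ^ j)" by (simp add: sum_distrib_left)
  finally show ?thesis by (simp add: tree_size_def)
qed

lemma tree_size_less_Suc: "1 \<le> A \<Longrightarrow> tree_size A h < tree_size A (Suc h)"
  by (simp add: tree_size_Suc le_imp_less_Suc)

lemma real_tree_size: "2 \<le> A \<Longrightarrow> real (tree_size A H) = (real A ^ H - 1) / (real A - 1)"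
  unfolding tree_size_def of_nat_sum of_nat_power by (rule geometric_sum) simp

lemma node_depth_le_iff: "1 \<le> A \<Longrightarrow> node_depth A n \<le> h \<longleftrightarrow> n < tree_size A h"
proof (induction n arbitrary: h rule: less_induct)
  case (less n)
  show ?case
  proof (cases "h = 0 \<or> n = 0")
    case True
    then show ?thesis using node_depth_ge_1[of A n] by (cases h) (auto simp: tree_size_Suc)
  next
    case False
    then obtain k where h: "h = Suc k" and n: "n \<noteq> 0" by (cases h) auto
    have "(n - 1) div A < n" using n by (meson div_le_dividend le_less_trans diff_less zero_less_one neq0_conv)
    then have "node_depth A ((n - 1) div A) \<le> k \<longleftrightarrow> (n - 1) div A < tree_size A k"
      using less by blast
    also have "\<dots> \<longleftrightarrow> n - 1 < A * tree_size A k"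
      using less.prems by (simp add: div_less_iff_less_mult mult.commute)
    finally show ?thesis using n by (auto simp: h node_depth_parent tree_size_Suc)
  qed
qed

definition node_of_path :: "nat \<Rightarrow> nat list \<Rightarrow> nat" where
  "node_of_path A xs = foldl (\<lambda>n a. A * n + a + 1) 0 xs"

lemma node_of_path_Nil [simp]: "node_of_path A [] = 0"
  by (simp add: node_of_path_def)

lemma node_of_path_snoc [simp]: "node_of_path A (xs @ [a]) = A * node_of_path A xs + a + 1"
  by (simp add: node_of_path_def)

lemma node_depth_node_of_path:
  "set xs \<subseteq> {..<A} \<Longrightarrow> node_depth A (node_of_path A xs) = Suc (length xs)"
  by (induction xs rule: rev_induct) auto

lemma node_of_path_inj:
  assumes "length xs = length ys" "set xs \<subseteq> {..<A}" "set ys \<subseteq> {..<A}"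
    and "node_of_path A xs = node_of_path A ys"
  shows "xs = ys"
  using assms
proof (induction xs arbitrary: ys rule: rev_induct)
  case Nil then show ?case by simp
next
  case (snoc a xs)
  then obtain ys' b where ys: "ys = ys' @ [b]"
    by (metis length_0_conv list.distinct(1) rev_exhaust length_append_singleton)
  have ab: "a < A" "b < A" using snoc.prems ys by auto
  have eq: "A * node_of_path A xs + a = A * node_of_path A ys' + b" using snoc.prems ys by simp
  have "(A * node_of_path A xs + a) mod A = a" "(A * node_of_path A ys' + b) mod A = b" using ab by auto
  then have "a = b" using eq by simp
  then have "node_of_path A xs = node_of_path A ys'" using eq ab by simp
  then show ?case using snoc ys \<open>a = b\<close> by auto
qed

section \<open>The tree games\<close>

definition bernoulli_reward :: "real \<Rightarrow> real pmf" where
  "bernoulli_reward q = map_pmf (\<lambda>b. if b then 1 else 0) (bernoulli_pmf q)"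

lemma set_bernoulli_reward: "set_pmf (bernoulli_reward q) \<subseteq> {0, 1}"
  by (auto simp: bernoulli_reward_def)

lemma finite_set_bernoulli_reward [simp]: "finite (set_pmf (bernoulli_reward q))"
  using set_bernoulli_reward finite_subset by blast

lemma integral_bernoulli_reward:
  "0 \<le> q \<Longrightarrow> q \<le> 1 \<Longrightarrow> (\<integral>r. g r \<partial>bernoulli_reward q) = g 1 * q + g 0 * (1 - q)"
  by (simp add: bernoulli_reward_def)

lemma pmf_bernoulli_reward:
  assumes "0 \<le> q" "q \<le> 1"
  shows "pmf (bernoulli_reward q) r = (if r = 1 then q else if r = 0 then 1 - q else 0)"
proof -
  define f :: "bool \<Rightarrow> real" where "f = (\<lambda>b. if b then 1 else 0)"
  have pmf_f: "pmf (bernoulli_reward q) (f b) = pmf (bernoulli_pmf q) b" for b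
    unfolding bernoulli_reward_def f_def[symmetric] by (rule pmf_map_inj') (simp add: inj_def f_def)
  consider "r = 1" | "r = 0" | "r \<notin> {0, 1}" by blast
  then show ?thesis
  proof cases
    case 1 then show ?thesis using pmf_f[of True] assms by (simp add: f_def)
  next
    case 2 then show ?thesis using pmf_f[of False] assms by (simp add: f_def)
  next
    case 3 then show ?thesis using set_bernoulli_reward by (auto simp: pmf_eq_0_set_pmf)
  qed
qed

text \<open>Infosets \<open>0, \<dots>, tree_size A H - 1\<close> form the complete \<open>A\<close>-ary tree of depth \<open>H\<close>
  (root \<open>0\<close>, children \<open>A * x + a + 1\<close>); the remaining infosets up to \<open>X\<close> are never reached
  and are attached at depth \<open>H\<close> below a fixed node of depth \<open>H - 1\<close>, only to make the count
  exactly \<open>X\<close>.\<close>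
definition tree_game :: "nat \<Rightarrow> nat \<Rightarrow> nat \<Rightarrow> (nat \<times> nat \<Rightarrow> real) \<Rightarrow> game" where
  "tree_game H A X \<theta> = \<lparr>hor = H, nact = A, infs = {..<X},
     lvl = (\<lambda>x. if x < tree_size A H then node_depth A x else H),
     par = (\<lambda>y. if y < tree_size A H then ((y - 1) div A, (y - 1) mod A)
               else (tree_size A (H - 2), 0)),
     init = return_pmf 0,
     trn = (\<lambda>x a. map_pmf (\<lambda>r. (r, Suc (A * x + a))) (bernoulli_reward (\<theta> (x, a))))\<rparr>"

lemma tree_game_simps [simp]:
  "hor (tree_game H A X \<theta>) = H" "nact (tree_game H A X \<theta>) = A"
  "infs (tree_game H A X \<theta>) = {..<X}" "init (tree_game H A X \<theta>) = return_pmf 0"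
  "trn (tree_game H A X \<theta>) = (\<lambda>x a. map_pmf (\<lambda>r. (r, Suc (A * x + a))) (bernoulli_reward (\<theta> (x, a))))"
  "lvl (tree_game H A X \<theta>) x = (if x < tree_size A H then node_depth A x else H)"
  "par (tree_game H A X \<theta>) y = (if y < tree_size A H then ((y - 1) div A, (y - 1) mod A)
                                   else (tree_size A (H - 2), 0))"
  by (simp_all add: tree_game_def)

lemma tree_game_child:
  assumes "1 \<le> A" "lvl (tree_game H A X \<theta>) x < H" "a < A"
  defines "G \<equiv> tree_game H A X \<theta>"
  shows "Suc (A * x + a) < tree_size A H \<and> lvl G (Suc (A * x + a)) = lvl G x + 1
    \<and> par G (Suc (A * x + a)) = (x, a)"
proof -
  have x: "x < tree_size A H" and "node_depth A x < H" using assms(2) by (auto split: if_splits)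
  then have "node_depth A (Suc (A * x + a)) \<le> H" using assms(3) by simp
  then have "Suc (A * x + a) < tree_size A H" using node_depth_le_iff[OF assms(1)] by blast
  moreover have "(A * x + a) div A = x" "(A * x + a) mod A = a" using assms(3) by auto
  ultimately show ?thesis using x assms(3) by (simp add: G_def)
qed

lemma tree_game_parent:
  assumes A: "2 \<le> A" and X: "tree_size A H \<le> X" and y: "y < X"
    and depth: "2 \<le> lvl (tree_game H A X \<theta>) y"
  defines "G \<equiv> tree_game H A X \<theta>"
  shows "fst (par G y) < X \<and> lvl G (fst (par G y)) + 1 = lvl G y \<and> snd (par G y) < A"
proof (cases "y < tree_size A H")
  case True
  then have "y \<noteq> 0" using depth by (cases "y = 0") auto
  then have "node_depth A y = Suc (node_depth A ((y - 1) div A))" and "(y - 1) div A < y"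
    by (simp_all add: node_depth_parent) (use div_le_dividend[of "y - Suc 0" A] in linarith)
  then show ?thesis using True y A by (auto simp: G_def)
next
  case False
  then have H2: "2 \<le> H" using depth by simp
  have A1: "1 \<le> A" using A by simp
  have a: "tree_size A (H - 2) < tree_size A (H - 1)"
    using tree_size_less_Suc[OF A1, of "H - 2"] H2 by (simp add: Suc_diff_Suc numeral_2_eq_2)
  have b: "tree_size A (H - 1) < tree_size A H" using tree_size_less_Suc[OF A1, of "H - 1"] H2 by simp
  have "node_depth A (tree_size A (H - 2)) \<le> H - 1"
    and "\<not> node_depth A (tree_size A (H - 2)) \<le> H - 2"
    using node_depth_le_iff[OF A1] a by blast+
  then have "node_depth A (tree_size A (H - 2)) = H - 1" by simp
  then show ?thesis using False a b H2 X A by (auto simp: G_def)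
qed

lemma wf_tree_game:
  assumes A: "2 \<le> A" and H: "1 \<le> H" and X: "tree_size A H \<le> X"
  shows "wf_game (tree_game H A X \<theta>)"
proof -
  define G where "G = tree_game H A X \<theta>"
  have A1: "1 \<le> A" using A by simp
  have G: "infs G = {..<X}" "nact G = A" "hor G = H" "init G = return_pmf 0"
    "trn G = (\<lambda>x a. map_pmf (\<lambda>r. (r, Suc (A * x + a))) (bernoulli_reward (\<theta> (x, a))))"
    "lvl G x = (if x < tree_size A H then node_depth A x else H)" for x
    by (simp_all add: G_def)
  have child: "Suc (A * x + a) \<in> infs G \<and> lvl G (Suc (A * x + a)) = lvl G x + 1
      \<and> par G (Suc (A * x + a)) = (x, a)" if "lvl G x < H" "a < A" for x a
    using tree_game_child[OF A1 that[unfolded G_def]] X unfolding G_def by auto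
  have "0 < tree_size A H" using node_depth_le_iff[OF A1, of 0 H] H by simp
  then have init: "set_pmf (init G) \<subseteq> {x\<in>infs G. lvl G x = 1}" using X by (simp add: G)
  have depth: "\<forall>x\<in>infs G. 1 \<le> lvl G x \<and> lvl G x \<le> H"
    using node_depth_ge_1 node_depth_le_iff[OF A1] H by (auto simp: G)
  have parents: "\<forall>y\<in>infs G. 2 \<le> lvl G y \<longrightarrow>
      fst (par G y) \<in> infs G \<and> lvl G (fst (par G y)) + 1 = lvl G y \<and> snd (par G y) < nact G"
    using tree_game_parent[OF A X] unfolding G_def by simp
  have children: "\<forall>x\<in>infs G. \<forall>a<nact G. lvl G x < hor G \<longrightarrow>
      (\<exists>y\<in>infs G. lvl G y = lvl G x + 1 \<and> par G y = (x, a))"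
    using child unfolding G(2,3) by blast
  have transitions: "\<forall>x\<in>infs G. \<forall>a<nact G. \<forall>(r, y)\<in>set_pmf (trn G x a). 0 \<le> r \<and> r \<le> 1 \<and>
      (lvl G x < hor G \<longrightarrow> y \<in> infs G \<and> lvl G y = lvl G x + 1 \<and> par G y = (x, a))"
    using child set_bernoulli_reward by (fastforce simp: G(2,3,5))
  show ?thesis
    unfolding wf_game_def G_def[symmetric] using init depth parents children transitions G(1,3) by simp
qed

lemma integral_pmf_point: "(\<integral>y. (if y = c then v else 0) \<partial>measure_pmf M) = pmf M c * (v::real)"
  by (subst integral_measure_pmf_real[where A="{c}"]) (auto split: if_splits)

lemma integral_bind_pmf_finite:
  fixes f :: "'b \<Rightarrow> real"
  assumes "finite (set_pmf M)" "\<And>x. x \<in> set_pmf M \<Longrightarrow> finite (set_pmf (N x))"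
  shows "(\<integral>y. f y \<partial>bind_pmf M N) = (\<integral>x. (\<integral>y. f y \<partial>N x) \<partial>M)"
  using assms
  by (subst pmf_expectation_bind[of "set_pmf M"]) (auto simp: integral_measure_pmf_real[of "set_pmf M"] mult.commute)

lemma pmf_map_Cons: "pmf (map_pmf (Cons e) E) (e' # \<tau>) = (if e = e' then pmf E \<tau> else 0)"
proof (cases "e = e'")
  case True
  then show ?thesis by (simp add: pmf_map_inj' inj_def)
next
  case False
  then have "e' # \<tau> \<notin> set_pmf (map_pmf (Cons e) E)" by auto
  then show ?thesis using False by (simp add: pmf_eq_0_set_pmf)
qed

lemma finite_set_pmf_policy: "\<mu> \<in> policies A \<Longrightarrow> finite (set_pmf (\<mu> x))"
  by (auto simp: policies_def intro: finite_subset)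

lemma ep_tree_game_Suc:
  "ep (tree_game H A X \<theta>) \<mu> (Suc n) x = bind_pmf (\<mu> x) (\<lambda>a. bind_pmf (bernoulli_reward (\<theta> (x, a)))
     (\<lambda>r. map_pmf (Cons (x, a, r)) (ep (tree_game H A X \<theta>) \<mu> n (Suc (A * x + a)))))"
  by (simp add: bind_map_pmf)

lemma episode_tree_game: "episode (tree_game H A X \<theta>) \<mu> = ep (tree_game H A X \<theta>) \<mu> H 0"
  by (simp add: episode_def bind_return_pmf)

lemma finite_set_ep_tree_game:
  "(\<And>x. finite (set_pmf (\<mu> x))) \<Longrightarrow> finite (set_pmf (ep (tree_game H A X \<theta>) \<mu> n x))"
  by (induction n arbitrary: x) (auto simp: ep_tree_game_Suc)

lemma pmf_ep_Suc_Nil: "pmf (ep G \<mu> (Suc n) x) [] = 0"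
  by (auto simp: pmf_eq_0_set_pmf split: prod.splits)

lemma pmf_ep_tree_game_Suc_Cons:
  "pmf (ep (tree_game H A X \<theta>) \<mu> (Suc n) x) ((x', a, r) # \<tau>) =
    (if x' = x then pmf (\<mu> x) a * pmf (bernoulli_reward (\<theta> (x, a))) r
       * pmf (ep (tree_game H A X \<theta>) \<mu> n (Suc (A * x + a))) \<tau> else 0)"
proof -
  let ?E = "\<lambda>b. ep (tree_game H A X \<theta>) \<mu> n (Suc (A * x + b))"
  have inner: "pmf (bind_pmf (bernoulli_reward (\<theta> (x, b))) (\<lambda>s. map_pmf (Cons (x, b, s)) (?E b)))
      ((x', a, r) # \<tau>)
     = (if b = a then pmf (bernoulli_reward (\<theta> (x, b))) r * (if x = x' then pmf (?E b) \<tau> else 0) else 0)"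
    for b
  proof -
    have "pmf (bind_pmf (bernoulli_reward (\<theta> (x, b))) (\<lambda>s. map_pmf (Cons (x, b, s)) (?E b)))
        ((x', a, r) # \<tau>)
       = (\<integral>s. (if s = r then (if x = x' \<and> b = a then pmf (?E b) \<tau> else 0) else 0) \<partial>bernoulli_reward (\<theta> (x, b)))"
      unfolding pmf_bind by (intro Bochner_Integration.integral_cong refl) (auto simp: pmf_map_Cons)
    then show ?thesis by (auto simp: integral_pmf_point)
  qed
  have "pmf (ep (tree_game H A X \<theta>) \<mu> (Suc n) x) ((x', a, r) # \<tau>) =
     (\<integral>b. (if b = a then pmf (bernoulli_reward (\<theta> (x, b))) r * (if x = x' then pmf (?E b) \<tau> else 0) else 0)
       \<partial>\<mu> x)"
    unfolding ep_tree_game_Suc pmf_bind[of "\<mu> x"] inner ..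
  also have "\<dots> = pmf (\<mu> x) a * (pmf (bernoulli_reward (\<theta> (x, a))) r * (if x = x' then pmf (?E a) \<tau> else 0))"
    by (subst integral_pmf_point[symmetric]) (intro Bochner_Integration.integral_cong refl, auto)
  finally show ?thesis by auto
qed

lemma integral_ep_tree_game_Suc:
  fixes g :: "traj \<Rightarrow> real"
  assumes fin: "\<And>x. finite (set_pmf (\<mu> x))"
  shows "(\<integral>\<tau>. g \<tau> \<partial>ep (tree_game H A X \<theta>) \<mu> (Suc n) x) =
    (\<integral>a. (\<integral>r. (\<integral>\<tau>. g ((x, a, r) # \<tau>) \<partial>ep (tree_game H A X \<theta>) \<mu> n (Suc (A * x + a)))
       \<partial>bernoulli_reward (\<theta> (x, a))) \<partial>\<mu> x)"
  unfolding ep_tree_game_Suc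
  by (subst integral_bind_pmf_finite) (auto simp: fin finite_set_ep_tree_game integral_bind_pmf_finite
      intro!: Bochner_Integration.integral_cong)

lemma depths_of_set_ep_tree_game:
  assumes "\<And>x. set_pmf (\<mu> x) \<subseteq> {..<A}" and "\<tau> \<in> set_pmf (ep (tree_game H A X \<theta>) \<mu> n x)"
  shows "map (\<lambda>(y, a, r). node_depth A y) \<tau> = [node_depth A x..<node_depth A x + n]"
  using assms(2)
proof (induction n arbitrary: x \<tau>)
  case 0 then show ?case by simp
next
  case (Suc n)
  then obtain a r \<tau>' where \<tau>: "\<tau> = (x, a, r) # \<tau>'" and a: "a \<in> set_pmf (\<mu> x)"
    and \<tau>': "\<tau>' \<in> set_pmf (ep (tree_game H A X \<theta>) \<mu> n (Suc (A * x + a)))"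
    by (auto simp: ep_tree_game_Suc)
  have "a < A" using a assms(1) by auto
  then show ?case using Suc.IH[OF \<tau>'] \<tau> by (simp add: upt_conv_Cons)
qed

definition path_sum :: "(nat \<times> nat \<Rightarrow> real) \<Rightarrow> traj \<Rightarrow> real" where
  "path_sum \<phi> \<tau> = sum_list (map (\<lambda>(y, a, r). \<phi> (y, a)) \<tau>)"

definition reward_sum :: "traj \<Rightarrow> real" where
  "reward_sum \<tau> = sum_list (map (\<lambda>(x, a, r). r) \<tau>)"

lemma path_sum_Cons [simp]: "path_sum \<phi> ((y, a, r) # \<tau>) = \<phi> (y, a) + path_sum \<phi> \<tau>"
  by (simp add: path_sum_def)

lemma reward_sum_Cons [simp]: "reward_sum ((y, a, r) # \<tau>) = r + reward_sum \<tau>"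
  by (simp add: reward_sum_def)

lemma path_sum_add: "path_sum (\<lambda>i. f i + g i) \<tau> = path_sum f \<tau> + path_sum g \<tau>"
  by (induction \<tau>) (auto simp: path_sum_def)

lemma path_sum_mono: "(\<And>i. f i \<le> g i) \<Longrightarrow> path_sum f \<tau> \<le> path_sum g \<tau>"
  by (induction \<tau>) (auto simp: path_sum_def intro: add_mono)

fun expected_path_sum :: "nat \<Rightarrow> (nat \<times> nat \<Rightarrow> real) \<Rightarrow> policy \<Rightarrow> nat \<Rightarrow> nat \<Rightarrow> real" where
  "expected_path_sum A \<phi> \<mu> 0 x = 0"
| "expected_path_sum A \<phi> \<mu> (Suc n) x =
     (\<integral>a. \<phi> (x, a) + expected_path_sum A \<phi> \<mu> n (Suc (A * x + a)) \<partial>\<mu> x)"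

lemma integral_path_sum:
  assumes fin: "\<And>x. finite (set_pmf (\<mu> x))"
  shows "(\<integral>\<tau>. path_sum \<phi> \<tau> \<partial>ep (tree_game H A X \<theta>) \<mu> n x) = expected_path_sum A \<phi> \<mu> n x"
proof (induction n arbitrary: x)
  case 0 then show ?case by (simp add: path_sum_def)
next
  case (Suc n)
  have "(\<integral>\<tau>. path_sum \<phi> ((x, a, r) # \<tau>) \<partial>ep (tree_game H A X \<theta>) \<mu> n y)
      = \<phi> (x, a) + expected_path_sum A \<phi> \<mu> n y" for a r y
    using Suc.IH[of y] fin
    by (simp add: Bochner_Integration.integral_add integrable_measure_pmf_finite finite_set_ep_tree_game)
  then show ?case
    by (subst integral_ep_tree_game_Suc[OF fin]) simp
qed

lemma integral_reward_sum:
  assumes fin: "\<And>x. finite (set_pmf (\<mu> x))" and \<theta>: "\<And>i. 0 \<le> \<theta> i \<and> \<theta> i \<le> 1"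
  shows "(\<integral>\<tau>. reward_sum \<tau> \<partial>ep (tree_game H A X \<theta>) \<mu> n x) = expected_path_sum A \<theta> \<mu> n x"
proof (induction n arbitrary: x)
  case 0 then show ?case by (simp add: reward_sum_def)
next
  case (Suc n)
  have "(\<integral>\<tau>. reward_sum ((x, a, r) # \<tau>) \<partial>ep (tree_game H A X \<theta>) \<mu> n y)
      = r + expected_path_sum A \<theta> \<mu> n y" for a r y
    using Suc.IH[of y] fin
    by (simp add: Bochner_Integration.integral_add integrable_measure_pmf_finite finite_set_ep_tree_game)
  moreover have "(\<integral>r. r + expected_path_sum A \<theta> \<mu> n y \<partial>bernoulli_reward (\<theta> (x, a)))
      = \<theta> (x, a) + expected_path_sum A \<theta> \<mu> n y" for a y
    using \<theta>[of "(x, a)"] by (simp add: integral_bernoulli_reward algebra_simps)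
  ultimately show ?case
    by (subst integral_ep_tree_game_Suc[OF fin]) simp
qed

lemma val_tree_game:
  assumes "\<mu> \<in> policies A" and "\<And>i. 0 \<le> \<theta> i \<and> \<theta> i \<le> 1"
  shows "val (tree_game H A X \<theta>) \<mu> = (\<integral>\<tau>. path_sum \<theta> \<tau> \<partial>ep (tree_game H A X \<theta>) \<mu> H 0)"
  using integral_reward_sum[OF finite_set_pmf_policy[OF assms(1)] assms(2)]
    integral_path_sum[OF finite_set_pmf_policy[OF assms(1)]]
  by (simp add: val_def episode_tree_game reward_sum_def)

section \<open>Leaves, visits and path policies\<close>

definition action_paths :: "nat \<Rightarrow> nat \<Rightarrow> nat list set" where
  "action_paths A H = {p. set p \<subseteq> {..<A} \<and> length p = H}"

definition leaf_of_path :: "nat \<Rightarrow> nat list \<Rightarrow> nat \<times> nat" where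
  "leaf_of_path A p = (node_of_path A (butlast p), last p)"

definition leaves :: "nat \<Rightarrow> nat \<Rightarrow> (nat \<times> nat) set" where
  "leaves A H = leaf_of_path A ` action_paths A H"

lemma finite_leaves: "finite (leaves A H)"
  unfolding leaves_def action_paths_def using finite_lists_length_eq[of "{..<A}" H] by simp

lemma node_depth_leaf:
  assumes "1 \<le> H" "i \<in> leaves A H"
  shows "node_depth A (fst i) = H"
proof -
  obtain p where p: "p \<in> action_paths A H" "i = leaf_of_path A p"
    using assms(2) by (auto simp: leaves_def)
  have "set (butlast p) \<subseteq> {..<A}" using p(1) by (auto simp: action_paths_def dest: in_set_butlastD)
  then show ?thesis using p assms(1) by (simp add: leaf_of_path_def node_depth_node_of_path action_paths_def)
qed

lemma card_leaves:
  assumes "1 \<le> H"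
  shows "card (leaves A H) = A ^ H"
proof -
  have "inj_on (leaf_of_path A) (action_paths A H)"
  proof (rule inj_onI)
    fix p q assume pq: "p \<in> action_paths A H" "q \<in> action_paths A H" "leaf_of_path A p = leaf_of_path A q"
    have "p \<noteq> []" "q \<noteq> []" using pq assms by (auto simp: action_paths_def)
    moreover have "butlast p = butlast q"
      using pq by (intro node_of_path_inj[of _ _ A])
        (auto simp: action_paths_def leaf_of_path_def dest: in_set_butlastD)
    moreover have "last p = last q" using pq by (simp add: leaf_of_path_def)
    ultimately show "p = q" by (metis append_butlast_last_id)
  qed
  then have "card (leaves A H) = card (action_paths A H)" by (simp add: leaves_def card_image)
  also have "\<dots> = A ^ H" unfolding action_paths_def using card_lists_length_eq[of "{..<A}" H] by simp
  finally show ?thesis .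
qed

definition visits :: "(nat \<times> nat) set \<Rightarrow> traj \<Rightarrow> nat" where
  "visits I \<tau> = length (filter (\<lambda>(y, a, r). (y, a) \<in> I) \<tau>)"

lemma visits_Nil [simp]: "visits I [] = 0"
  by (simp add: visits_def)

lemma visits_Cons [simp]: "visits I ((y, a, r) # \<tau>) = (if (y, a) \<in> I then 1 else 0) + visits I \<tau>"
  by (simp add: visits_def)

lemma visits_mono: "I \<subseteq> J \<Longrightarrow> visits I \<tau> \<le> visits J \<tau>"
  by (induction \<tau>) auto

lemma sum_visits_singleton: "finite I \<Longrightarrow> (\<Sum>i\<in>I. visits {i} \<tau>) = visits I \<tau>"
proof (induction \<tau>)
  case Nil then show ?case by simp
next
  case (Cons e \<tau>)
  obtain y a r where e: "e = (y, a, r)" by (cases e) auto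
  have "(\<Sum>i\<in>I. visits {i} (e # \<tau>)) = (\<Sum>i\<in>I. (if (y, a) = i then 1 else 0)) + (\<Sum>i\<in>I. visits {i} \<tau>)"
    by (simp add: e sum.distrib)
  also have "\<dots> = (if (y, a) \<in> I then 1 else 0) + visits I \<tau>"
    using Cons by (simp add: sum.delta)
  finally show ?case by (simp add: e)
qed

lemma path_sum_indicator: "path_sum (\<lambda>i. if i \<in> I then c else 0) \<tau> = c * real (visits I \<tau>)"
  by (induction \<tau>) (auto simp: path_sum_def visits_def algebra_simps)

lemma length_filter_mono:
  "(\<And>x. x \<in> set xs \<Longrightarrow> P x \<Longrightarrow> Q x) \<Longrightarrow> length (filter P xs) \<le> length (filter Q xs)"
  by (induction xs) auto

lemma visits_leaves_le_1:
  assumes H: "1 \<le> H" and \<mu>: "\<mu> \<in> policies A"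
    and \<tau>: "\<tau> \<in> set_pmf (ep (tree_game H' A X \<theta>) \<mu> H 0)"
  shows "visits (leaves A H) \<tau> \<le> 1"
proof -
  have depths: "map (\<lambda>(y, a, r). node_depth A y) \<tau> = [1..<1 + H]"
    using depths_of_set_ep_tree_game[OF _ \<tau>] \<mu> by (simp add: policies_def)
  have "visits (leaves A H) \<tau> \<le> length (filter (\<lambda>(y, a, r). node_depth A y = H) \<tau>)"
    unfolding visits_def
    by (rule length_filter_mono) (use node_depth_leaf[OF H] in fastforce)
  also have "\<dots> = length (filter (\<lambda>l. l = H) (map (\<lambda>(y, a, r). node_depth A y) \<tau>))"
    by (induction \<tau>) auto
  also have "\<dots> = length (filter (\<lambda>l. l = H) ([1..<H] @ [H]))"
    using H by (simp add: depths)
  also have "\<dots> = 1" by simp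
  finally show ?thesis .
qed

definition path_policy :: "nat \<Rightarrow> nat list \<Rightarrow> policy" where
  "path_policy A p = (\<lambda>x. return_pmf (let h = node_depth A x - 1 in if h < length p then p ! h else 0))"

lemma path_policy_in_policies: "set p \<subseteq> {..<A} \<Longrightarrow> 0 < A \<Longrightarrow> path_policy A p \<in> policies A"
  by (auto simp: policies_def path_policy_def Let_def) (meson lessThan_iff nth_mem subsetD)

lemma expected_path_sum_path_policy:
  assumes p: "set p \<subseteq> {..<A}" and len: "k + n \<le> length p"
  shows "expected_path_sum A \<phi> (path_policy A p) n (node_of_path A (take k p))
    = (\<Sum>j\<in>{k..<k+n}. \<phi> (node_of_path A (take j p), p ! j))"
  using len
proof (induction n arbitrary: k)
  case 0 then show ?case by simp
next
  case (Suc n)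
  have k: "k < length p" using Suc.prems by simp
  have "set (take k p) \<subseteq> {..<A}" using p by (meson order_trans set_take_subset)
  then have "node_depth A (node_of_path A (take k p)) = Suc k"
    using node_depth_node_of_path k by simp
  moreover have "Suc (A * node_of_path A (take k p) + p ! k) = node_of_path A (take (Suc k) p)"
    using k by (simp add: take_Suc_conv_app_nth)
  ultimately have "expected_path_sum A \<phi> (path_policy A p) (Suc n) (node_of_path A (take k p))
      = \<phi> (node_of_path A (take k p), p ! k) + expected_path_sum A \<phi> (path_policy A p) n (node_of_path A (take (Suc k) p))"
    using k by (simp add: path_policy_def)
  also have "\<dots> = (\<Sum>j\<in>{k..<k+Suc n}. \<phi> (node_of_path A (take j p), p ! j))"
    using Suc.IH[of "Suc k"] Suc.prems by (simp add: sum.atLeast_Suc_lessThan)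
  finally show ?case .
qed

lemma val_path_policy:
  assumes p: "p \<in> action_paths A H" and H: "1 \<le> H" and A: "0 < A"
    and \<theta>: "\<And>i. 0 \<le> \<theta> i \<and> \<theta> i \<le> 1" and \<theta>_inner: "\<And>y a. node_depth A y < H \<Longrightarrow> \<theta> (y, a) = 0"
  shows "val (tree_game H A X \<theta>) (path_policy A p) = \<theta> (leaf_of_path A p)"
proof -
  have ps: "set p \<subseteq> {..<A}" and lp: "length p = H" using p by (auto simp: action_paths_def)
  have "val (tree_game H A X \<theta>) (path_policy A p)
      = expected_path_sum A \<theta> (path_policy A p) H (node_of_path A (take 0 p))"
    using path_policy_in_policies[OF ps A] integral_path_sum[of "path_policy A p"] \<theta>
    by (simp add: val_tree_game path_policy_def)
  also have "\<dots> = (\<Sum>j<Suc (H - 1). \<theta> (node_of_path A (take j p), p ! j))"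
    using expected_path_sum_path_policy[OF ps, of 0 H] lp H by (simp add: atLeast0LessThan)
  also have "\<dots> = \<theta> (node_of_path A (take (H - 1) p), p ! (H - 1))"
  proof -
    have "node_depth A (node_of_path A (take j p)) < H" if "j < H - 1" for j
      using node_depth_node_of_path[of "take j p" A] ps that lp
      by (simp add: order_trans[OF set_take_subset])
    then show ?thesis by (simp add: \<theta>_inner)
  qed
  also have "\<dots> = \<theta> (leaf_of_path A p)"
  proof -
    have "p \<noteq> []" using lp H by auto
    then show ?thesis using lp by (simp add: leaf_of_path_def butlast_conv_take last_conv_nth)
  qed
  finally show ?thesis .
qed

section \<open>Histories and change of measure\<close>

lemma pmf_hist_Suc:
  "pmf (hist G alg (Suc t)) z = (if z = [] then 0 else
     pmf (hist G alg t) (butlast z) * pmf (episode G (alg (butlast z))) (last z))"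
proof -
  have inner: "pmf (map_pmf (\<lambda>\<tau>. hs @ [\<tau>]) (episode G (alg hs))) z =
     (if hs = butlast z \<and> z \<noteq> [] then pmf (episode G (alg (butlast z))) (last z) else 0)" for hs
  proof (cases "hs = butlast z \<and> z \<noteq> []")
    case True
    have inj: "inj (\<lambda>\<tau>. hs @ [\<tau>])" by (simp add: inj_def)
    have "z = hs @ [last z]" using True by simp
    then have "pmf (map_pmf (\<lambda>\<tau>. hs @ [\<tau>]) (episode G (alg hs))) z = pmf (episode G (alg hs)) (last z)"
      using pmf_map_inj'[OF inj] by metis
    then show ?thesis using True by simp
  next
    case False
    then have "z \<notin> set_pmf (map_pmf (\<lambda>\<tau>. hs @ [\<tau>]) (episode G (alg hs)))" by auto
    then show ?thesis unfolding if_not_P[OF False] by (simp add: pmf_eq_0_set_pmf)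
  qed
  have "pmf (hist G alg (Suc t)) z = (\<integral>hs. (if hs = butlast z then
      (if z \<noteq> [] then pmf (episode G (alg (butlast z))) (last z) else 0) else 0) \<partial>hist G alg t)"
    by (simp add: pmf_bind inner)
  then show ?thesis by (auto simp: integral_pmf_point)
qed

lemma set_pmf_hist:
  assumes "hs \<in> set_pmf (hist G alg t)"
  shows "length hs = t" "k < t \<Longrightarrow> hs ! k \<in> set_pmf (episode G (alg (take k hs)))"
proof -
  have "length hs = t \<and> (\<forall>k<t. hs ! k \<in> set_pmf (episode G (alg (take k hs))))"
    using assms
  proof (induction t arbitrary: hs)
    case 0 then show ?case by simp
  next
    case (Suc t)
    then obtain hs' \<tau> where hs: "hs = hs' @ [\<tau>]" and "hs' \<in> set_pmf (hist G alg t)"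
      and \<tau>: "\<tau> \<in> set_pmf (episode G (alg hs'))" by auto
    with Suc.IH have "length hs' = t" "\<forall>k<t. hs' ! k \<in> set_pmf (episode G (alg (take k hs')))"
      by auto
    then show ?case using hs \<tau> by (auto simp: nth_append less_Suc_eq)
  qed
  then show "length hs = t" "k < t \<Longrightarrow> hs ! k \<in> set_pmf (episode G (alg (take k hs)))" by auto
qed

lemma finite_set_pmf_hist:
  "(\<And>hs. finite (set_pmf (episode G (alg hs)))) \<Longrightarrow> finite (set_pmf (hist G alg t))"
  by (induction t) auto

lemma finite_set_pmf_hist_tree_game:
  assumes "\<And>hs. alg hs \<in> policies A"
  shows "finite (set_pmf (hist (tree_game H A' X \<theta>) alg t))"
  using assms by (intro finite_set_pmf_hist)
    (auto simp: episode_tree_game intro!: finite_set_ep_tree_game finite_set_pmf_policy)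

lemma sq_le_product:
  fixes a b a1 a2 b1 b2 \<rho> :: real
  assumes "a\<^sup>2 \<le> \<rho> ^ k * a1 * a2" "b\<^sup>2 \<le> \<rho> ^ l * b1 * b2"
    and "0 \<le> \<rho>" "0 \<le> a1" "0 \<le> a2" "0 \<le> b1" "0 \<le> b2"
  shows "(a * b)\<^sup>2 \<le> \<rho> ^ (k + l) * (a1 * b1) * (a2 * b2)"
proof -
  have "(a * b)\<^sup>2 = a\<^sup>2 * b\<^sup>2" by (simp add: power_mult_distrib)
  also have "\<dots> \<le> (\<rho> ^ k * a1 * a2) * (\<rho> ^ l * b1 * b2)"
    using assms by (intro mult_mono) auto
  also have "\<dots> = \<rho> ^ (k + l) * (a1 * b1) * (a2 * b2)" by (simp add: power_add mult_ac)
  finally show ?thesis .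
qed

lemma pmf_ep_tree_game_sq_le:
  assumes R: "\<And>i r. (pmf (bernoulli_reward (\<theta>\<^sub>0 i)) r)\<^sup>2 \<le> \<rho> ^ (if i = j then 1 else 0)
      * pmf (bernoulli_reward (\<theta>\<^sub>1 i)) r * pmf (bernoulli_reward (\<theta>\<^sub>2 i)) r"
    and \<rho>: "0 \<le> \<rho>"
  shows "(pmf (ep (tree_game H A X \<theta>\<^sub>0) \<mu> n x) \<tau>)\<^sup>2 \<le> \<rho> ^ visits {j} \<tau>
    * pmf (ep (tree_game H A X \<theta>\<^sub>1) \<mu> n x) \<tau> * pmf (ep (tree_game H A X \<theta>\<^sub>2) \<mu> n x) \<tau>"
proof (induction n arbitrary: x \<tau>)
  case 0 then show ?case by (cases "\<tau> = []") auto
next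
  case (Suc n)
  show ?case
  proof (cases \<tau>)
    case Nil then show ?thesis by (simp only: pmf_ep_Suc_Nil) simp
  next
    case (Cons e \<tau>')
    obtain x' a r where e: "e = (x', a, r)" by (cases e) auto
    let ?m = "pmf (\<mu> x) a"
    have m: "?m\<^sup>2 \<le> \<rho> ^ 0 * ?m * ?m" by (simp add: power2_eq_square)
    have "((?m * pmf (bernoulli_reward (\<theta>\<^sub>0 (x, a))) r)
         * pmf (ep (tree_game H A X \<theta>\<^sub>0) \<mu> n (Suc (A * x + a))) \<tau>')\<^sup>2
      \<le> \<rho> ^ (0 + (if (x, a) = j then 1 else 0) + visits {j} \<tau>')
         * ((?m * pmf (bernoulli_reward (\<theta>\<^sub>1 (x, a))) r) * pmf (ep (tree_game H A X \<theta>\<^sub>1) \<mu> n (Suc (A * x + a))) \<tau>')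
         * ((?m * pmf (bernoulli_reward (\<theta>\<^sub>2 (x, a))) r) * pmf (ep (tree_game H A X \<theta>\<^sub>2) \<mu> n (Suc (A * x + a))) \<tau>')"
      by (intro sq_le_product m R Suc.IH \<rho> mult_nonneg_nonneg pmf_nonneg)
    then show ?thesis
      by (auto simp: Cons e pmf_ep_tree_game_Suc_Cons mult_ac simp del: ep.simps)
  qed
qed

definition hist_visits :: "nat \<times> nat \<Rightarrow> traj list \<Rightarrow> nat" where
  "hist_visits j hs = sum_list (map (visits {j}) hs)"

lemma pmf_hist_tree_game_sq_le:
  assumes R: "\<And>i r. (pmf (bernoulli_reward (\<theta>\<^sub>0 i)) r)\<^sup>2 \<le> \<rho> ^ (if i = j then 1 else 0)
      * pmf (bernoulli_reward (\<theta>\<^sub>1 i)) r * pmf (bernoulli_reward (\<theta>\<^sub>2 i)) r"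
    and \<rho>: "0 \<le> \<rho>"
  shows "(pmf (hist (tree_game H A X \<theta>\<^sub>0) alg t) z)\<^sup>2 \<le> \<rho> ^ hist_visits j z
    * pmf (hist (tree_game H A X \<theta>\<^sub>1) alg t) z * pmf (hist (tree_game H A X \<theta>\<^sub>2) alg t) z"
proof (induction t arbitrary: z)
  case 0 then show ?case by (cases "z = []") (auto simp: hist_visits_def)
next
  case (Suc t)
  show ?case
  proof (cases "z = []")
    case True then show ?thesis by (simp add: pmf_hist_Suc del: hist.simps)
  next
    case False
    then have "hist_visits j z = hist_visits j (butlast z) + visits {j} (last z)"
      by (subst append_butlast_last_id[OF False, symmetric]) (simp add: hist_visits_def del: append_butlast_last_id)
    moreover have "(pmf (hist (tree_game H A X \<theta>\<^sub>0) alg t) (butlast z)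
        * pmf (episode (tree_game H A X \<theta>\<^sub>0) (alg (butlast z))) (last z))\<^sup>2
      \<le> \<rho> ^ (hist_visits j (butlast z) + visits {j} (last z))
        * (pmf (hist (tree_game H A X \<theta>\<^sub>1) alg t) (butlast z) * pmf (episode (tree_game H A X \<theta>\<^sub>1) (alg (butlast z))) (last z))
        * (pmf (hist (tree_game H A X \<theta>\<^sub>2) alg t) (butlast z) * pmf (episode (tree_game H A X \<theta>\<^sub>2) (alg (butlast z))) (last z))"
      unfolding episode_tree_game
      by (intro sq_le_product Suc.IH pmf_ep_tree_game_sq_le[OF R] \<rho> pmf_nonneg)
    ultimately show ?thesis using False by (simp add: pmf_hist_Suc del: hist.simps)
  qed
qed

lemma two_mul_le_of_sq_le:
  fixes p q q' R l :: real
  assumes "0 \<le> q" "0 \<le> q'" "0 < R" "0 < l" "p\<^sup>2 \<le> R * q * q'"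
  shows "2 * p \<le> R * l * q + q' / l"
proof -
  define u where "u = R * l * q"
  define v where "v = q' / l"
  have "u * v = R * q * q'" "0 \<le> u" "0 \<le> v" using assms by (simp_all add: u_def v_def)
  moreover have "4 * (u * v) \<le> (u + v)\<^sup>2"
    using sum_squares_ge_zero[of "u - v" 0] by (simp add: power2_eq_square algebra_simps)
  ultimately have "(2 * p)\<^sup>2 \<le> (u + v)\<^sup>2" using assms(5) by (simp add: power_mult_distrib)
  then have "2 * p \<le> u + v" using \<open>0 \<le> u\<close> \<open>0 \<le> v\<close> abs_le_square_iff[of "2 * p" "u + v"] by simp
  then show ?thesis by (simp add: u_def v_def)
qed

text \<open>From \<open>P(z)\<^sup>2 \<le> \<rho>\<^bsup>N z\<^esub> Q(z) Q'(z)\<close>: summing \<open>2 P(z) \<le> R l Q(z) + Q'(z) / l\<close> over \<open>F\<close> and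
  optimising over \<open>l\<close> gives \<open>P(F)\<^sup>2 \<le> R Q(F)\<close>, with \<open>R = \<rho>\<^sup>m\<close> bounding \<open>\<rho>\<^bsup>N z\<^esub>\<close> on \<open>F\<close>.\<close>
lemma prob_sq_le_of_pmf_sq_le:
  fixes P Q Q' :: "'a pmf"
  assumes fin: "finite (set_pmf P)" and \<rho>: "1 \<le> \<rho>"
    and pt: "\<And>z. (pmf P z)\<^sup>2 \<le> \<rho> ^ N z * pmf Q z * pmf Q' z"
    and NF: "\<And>z. z \<in> F \<Longrightarrow> N z \<le> m"
  shows "(measure_pmf.prob P F)\<^sup>2 \<le> \<rho> ^ m * measure_pmf.prob Q F"
proof -
  define D where "D = F \<inter> set_pmf P"
  define R where "R = \<rho> ^ m"
  have R0: "0 < R" using \<rho> by (simp add: R_def)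
  have finD: "finite D" using fin by (simp add: D_def)
  have PF: "measure_pmf.prob P F = (\<Sum>z\<in>D. pmf P z)"
    using measure_Int_set_pmf[of P F] measure_measure_pmf_finite[OF finD, of P] by (simp add: D_def)
  have QD: "(\<Sum>z\<in>D. pmf Q z) \<le> measure_pmf.prob Q F"
    using measure_measure_pmf_finite[OF finD, of Q] measure_pmf.finite_measure_mono[of D F Q]
    by (simp add: D_def)
  have Q'D: "(\<Sum>z\<in>D. pmf Q' z) \<le> 1"
    using measure_measure_pmf_finite[OF finD, of Q'] measure_pmf.prob_le_1[of Q' D] by simp
  have ptR: "(pmf P z)\<^sup>2 \<le> R * pmf Q z * pmf Q' z" if "z \<in> D" for z
  proof -
    have "\<rho> ^ N z \<le> R" unfolding R_def using NF[of z] that \<rho> by (intro power_increasing) (auto simp: D_def)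
    then have "\<rho> ^ N z * (pmf Q z * pmf Q' z) \<le> R * (pmf Q z * pmf Q' z)" by (intro mult_right_mono) auto
    then show ?thesis using pt[of z] by (simp add: mult.assoc)
  qed
  have bound: "2 * measure_pmf.prob P F \<le> R * l * measure_pmf.prob Q F + 1 / l" if l: "0 < l" for l
  proof -
    have "2 * measure_pmf.prob P F = (\<Sum>z\<in>D. 2 * pmf P z)" by (simp add: PF sum_distrib_left)
    also have "\<dots> \<le> (\<Sum>z\<in>D. R * l * pmf Q z + pmf Q' z / l)"
      by (intro sum_mono two_mul_le_of_sq_le[OF _ _ R0 l ptR]) auto
    also have "\<dots> = R * l * (\<Sum>z\<in>D. pmf Q z) + (\<Sum>z\<in>D. pmf Q' z) / l"
      by (simp add: sum.distrib sum_distrib_left sum_divide_distrib)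
    also have "\<dots> \<le> R * l * measure_pmf.prob Q F + 1 / l"
      using QD Q'D R0 l by (intro add_mono mult_left_mono divide_right_mono) auto
    finally show ?thesis .
  qed
  define a where "a = measure_pmf.prob Q F"
  define p where "p = measure_pmf.prob P F"
  have "0 \<le> a" "0 \<le> p" by (simp_all add: a_def p_def)
  show ?thesis
  proof (cases "a = 0")
    case True
    have "p \<le> 0"
    proof (rule ccontr)
      assume "\<not> p \<le> 0"
      then have "2 * p \<le> 1 / (1 / p)" using bound[of "1 / p"] True by (simp add: a_def p_def)
      then show False using \<open>\<not> p \<le> 0\<close> by simp
    qed
    then have "p = 0" using \<open>0 \<le> p\<close> by simp
    then show ?thesis using \<open>0 \<le> a\<close> R0 by (simp add: p_def a_def R_def)
  next
    case False
    define s where "s = sqrt (R * a)"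
    have s0: "0 < s" and ss: "s * s = R * a" using R0 False \<open>0 \<le> a\<close> by (simp_all add: s_def)
    have "2 * p \<le> R * (1 / s) * a + 1 / (1 / s)" using bound[of "1 / s"] s0 by (simp add: a_def p_def)
    also have "R * (1 / s) * a = s" using ss s0 by (simp add: field_simps)
    finally have "p \<le> s" using s0 by simp
    then have "p\<^sup>2 \<le> s\<^sup>2" using \<open>0 \<le> p\<close> by (intro power_mono) auto
    then show ?thesis using ss by (simp add: power2_eq_square p_def a_def R_def)
  qed
qed

lemma sum_prob_le:
  fixes M :: "'a pmf" and B :: "'i \<Rightarrow> 'a set"
  assumes fin: "finite (set_pmf M)" and I: "finite I"
    and pt: "\<And>z. z \<in> set_pmf M \<Longrightarrow> (\<Sum>i\<in>I. indicator (B i) z) \<le> (c::real)"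
  shows "(\<Sum>i\<in>I. measure_pmf.prob M (B i)) \<le> c"
proof -
  let ?S = "set_pmf M"
  have prob: "measure_pmf.prob M C = (\<Sum>z\<in>?S. pmf M z * indicator C z)" for C
  proof -
    have "measure_pmf.prob M C = measure_pmf.prob M (?S \<inter> C)"
      using measure_Int_set_pmf[of M C] by (simp add: Int_commute)
    also have "\<dots> = (\<Sum>z\<in>?S \<inter> C. pmf M z)" using fin by (simp add: measure_measure_pmf_finite)
    also have "\<dots> = (\<Sum>z\<in>?S. pmf M z * indicator C z)"
      using fin by (simp add: sum.inter_restrict indicator_def if_distrib cong: if_cong)
    finally show ?thesis .
  qed
  have "(\<Sum>i\<in>I. measure_pmf.prob M (B i)) = (\<Sum>z\<in>?S. pmf M z * (\<Sum>i\<in>I. indicator (B i) z))"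
    by (simp add: prob sum_distrib_left sum.swap[of _ I])
  also have "\<dots> \<le> (\<Sum>z\<in>?S. pmf M z * c)"
    by (intro sum_mono mult_left_mono pt) auto
  also have "\<dots> = c" using sum_pmf_eq_1[OF fin, of M] by (simp add: sum_distrib_right[symmetric])
  finally show ?thesis .
qed

lemma exists_le_average:
  fixes f :: "'i \<Rightarrow> real"
  assumes "finite I" "I \<noteq> {}" "(\<Sum>i\<in>I. f i) \<le> c"
  shows "\<exists>i\<in>I. f i \<le> c / card I"
proof (rule ccontr)
  assume "\<not> ?thesis"
  then have "(\<Sum>i\<in>I. c / card I) < (\<Sum>i\<in>I. f i)" using assms by (intro sum_strict_mono) auto
  then show False using assms by simp
qed

lemma sum_hist_visits: "finite I \<Longrightarrow> (\<Sum>i\<in>I. hist_visits i hs) = sum_list (map (visits I) hs)"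
  by (induction hs) (auto simp: hist_visits_def sum.distrib sum_visits_singleton)

lemma exp_le_one_minus_pow:
  fixes x :: real
  assumes "0 \<le> x" "x \<le> 1/2"
  shows "exp (- 2 * (real n * x)) \<le> (1 - x) ^ n"
proof -
  have "2 * x\<^sup>2 \<le> x" using assms mult_left_mono[of x "1/2" x] by (simp add: power2_eq_square)
  then have "- 2 * x \<le> ln (1 - x)" using ln_one_minus_pos_lower_bound[OF assms] by linarith
  then have "- 2 * (real n * x) \<le> real n * ln (1 - x)"
    using mult_left_mono[of "- 2 * x" "ln (1 - x)" "real n"] by simp
  then have "exp (- 2 * (real n * x)) \<le> exp (real n * ln (1 - x))" by simp
  also have "\<dots> = (1 - x) ^ n" using assms by (simp add: exp_of_nat_mult)
  finally show ?thesis .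
qed

lemma exists_visit_budget:
  fixes T K L D :: real
  assumes T: "0 < T" and K: "2 \<le> K" and D: "0 \<le> D" "D \<le> 1/8" "D\<^sup>2 \<le> L * (K - 1) / (128 * T)"
  shows "\<exists>m. 4 * T < (real m + 1) * (K - 1) \<and> exp (- L) \<le> (1 - 16 * D\<^sup>2) ^ m"
proof (intro exI conjI)
  define m where "m = nat \<lfloor>4 * T / (K - 1)\<rfloor>"
  have q: "0 \<le> 4 * T / (K - 1)" using T K by simp
  then have m_le: "real m \<le> 4 * T / (K - 1)" and m_gt: "4 * T / (K - 1) < real m + 1"
    by (simp_all add: m_def)
  show "4 * T < (real m + 1) * (K - 1)" using m_gt K by (simp add: divide_less_eq)
  have x: "0 \<le> 16 * D\<^sup>2" "16 * D\<^sup>2 \<le> 1/2"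
    using D mult_mono[OF D(2) D(2)] by (simp_all add: power2_eq_square)
  have "real m * (16 * D\<^sup>2) \<le> (4 * T / (K - 1)) * (16 * (L * (K - 1) / (128 * T)))"
    using m_le D(3) q by (intro mult_mono) auto
  also have "\<dots> = L / 2" using T K by (simp add: field_simps)
  finally have "exp (- L) \<le> exp (- 2 * (real m * (16 * D\<^sup>2)))" by simp
  also have "\<dots> \<le> (1 - 16 * D\<^sup>2) ^ m" by (rule exp_le_one_minus_pow[OF x])
  finally show "exp (- L) \<le> (1 - 16 * D\<^sup>2) ^ m" .
qed

lemma gap_scale_ge:
  fixes K T L AX :: real
  assumes K: "2 \<le> K" and T: "0 < T" and L: "0 < L" and AX: "0 \<le> AX" "AX \<le> 4 * K"
    and TL: "0.4 * (2 * K) * L \<le> T"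
  shows "1/64 * sqrt (T * AX * L) \<le> min (1/8) (sqrt (L * (K - 1) / (128 * T))) * T / 2"
proof -
  define s where "s = sqrt (L * (K - 1) / (128 * T))"
  have s0: "0 \<le> s" using K L T by (simp add: s_def)
  have ss: "s\<^sup>2 = L * (K - 1) / (128 * T)" using K L T by (simp add: s_def)
  have TAL: "0 \<le> T * AX * L" "T * AX * L \<le> T * (4 * K) * L"
    using T AX L by (simp_all add: mult_left_mono mult_right_mono)
  have "1/64 * sqrt (T * AX * L) \<le> T / 16"
  proof -
    have "T * (4 * K) * L \<le> (4 * T)\<^sup>2"
      using mult_left_mono[of "4 * K * L" "16 * T" T] TL T by (simp add: power2_eq_square mult_ac)
    with TAL(2) have "T * AX * L \<le> (4 * T)\<^sup>2" by (rule order_trans)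
    then have "sqrt (T * AX * L) \<le> sqrt ((4 * T)\<^sup>2)" by (rule real_sqrt_le_mono)
    also have "\<dots> = 4 * T" using T by (simp only: real_sqrt_abs)
    finally show ?thesis by simp
  qed
  moreover have "1/64 * sqrt (T * AX * L) \<le> s * T / 2"
  proof (rule power2_le_imp_le)
    have "(1/64 * sqrt (T * AX * L))\<^sup>2 = T * AX * L / 4096"
      using TAL by (simp add: power_mult_distrib power_divide)
    also have "\<dots> \<le> T * (8 * (K - 1)) * L / 4096"
      using TAL mult_right_mono[OF mult_left_mono[of "4 * K" "8 * (K - 1)" T] L[THEN less_imp_le]] K T
      by (simp add: divide_right_mono)
    also have "\<dots> = s\<^sup>2 * T\<^sup>2 / 4" unfolding ss using T by (simp add: power2_eq_square field_simps)
    also have "\<dots> = (s * T / 2)\<^sup>2" by (simp add: power_mult_distrib power_divide)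
    finally show "(1/64 * sqrt (T * AX * L))\<^sup>2 \<le> (s * T / 2)\<^sup>2" .
  qed (use s0 T in simp)
  ultimately show ?thesis by (simp add: s_def min_def)
qed

section \<open>The hard instances\<close>

lemma regret_ge_sum:
  assumes "\<mu> \<in> policies (nact G)" and "\<And>\<mu>. \<mu> \<in> policies (nact G) \<Longrightarrow> val G \<mu> \<le> 1"
  shows "(\<Sum>t<T. val G \<mu> - val G (alg (take t hs))) \<le> regret G alg T hs"
  unfolding regret_def
proof (rule cSup_upper)
  show "(\<Sum>t<T. val G \<mu> - val G (alg (take t hs)))
      \<in> (\<lambda>\<mu>. \<Sum>t<T. val G \<mu> - val G (alg (take t hs))) ` policies (nact G)"
    using assms(1) by blast
  show "bdd_above ((\<lambda>\<mu>. \<Sum>t<T. val G \<mu> - val G (alg (take t hs))) ` policies (nact G))"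
    using assms(2) by (intro bdd_aboveI2[where M="\<Sum>t<T. 1 - val G (alg (take t hs))"] sum_mono) auto
qed

text \<open>The instance \<open>lowered_means j\<close> is not one of the hard games; it only enters the change of
  measure.  \<open>reach \<mu>\<close> is the probability that \<open>\<mu>\<close> reaches \<open>base_leaf\<close>.\<close>
locale hard_instances =
  fixes A H X :: nat and D :: real
  assumes A: "2 \<le> A" and H: "1 \<le> H" and D: "0 \<le> D" "D \<le> 1/8"
begin

definition base_leaf :: "nat \<times> nat" where
  "base_leaf = leaf_of_path A (replicate H 0)"

definition base_means :: "nat \<times> nat \<Rightarrow> real" where
  "base_means i = (if i \<in> leaves A H then 1/2 else 0) + (if i \<in> {base_leaf} then D else 0)"

definition raised_means :: "nat \<times> nat \<Rightarrow> nat \<times> nat \<Rightarrow> real" where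
  "raised_means j i = base_means i + (if i \<in> {j} then 2 * D else 0)"

definition lowered_means :: "nat \<times> nat \<Rightarrow> nat \<times> nat \<Rightarrow> real" where
  "lowered_means j i = base_means i - (if i \<in> {j} then 2 * D else 0)"

definition reach :: "policy \<Rightarrow> real" where
  "reach \<mu> = expected_path_sum A (\<lambda>i. if i \<in> {base_leaf} then 1 else 0) \<mu> H 0"

definition total_reach :: "algorithm \<Rightarrow> nat \<Rightarrow> traj list \<Rightarrow> real" where
  "total_reach alg T hs = (\<Sum>t<T. reach (alg (take t hs)))"

lemma base_path: "replicate H 0 \<in> action_paths A H"
  using A by (auto simp: action_paths_def)

lemma base_leaf_in_leaves: "base_leaf \<in> leaves A H"
  using base_path by (simp add: base_leaf_def leaves_def)

lemma base_means_range: "0 \<le> base_means i \<and> base_means i \<le> 1"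
  using D by (auto simp: base_means_def)

lemma raised_means_range: "j \<noteq> base_leaf \<Longrightarrow> 0 \<le> raised_means j i \<and> raised_means j i \<le> 1"
  using D by (auto simp: raised_means_def base_means_def)

lemma base_means_le_leaves: "base_means i \<le> (if i \<in> leaves A H then 1 else 0)"
  using D base_leaf_in_leaves by (auto simp: base_means_def)

lemma raised_means_le_leaves:
  "j \<in> leaves A H \<Longrightarrow> j \<noteq> base_leaf \<Longrightarrow> raised_means j i \<le> (if i \<in> leaves A H then 1 else 0)"
  using D base_leaf_in_leaves by (auto simp: raised_means_def base_means_def)

lemma means_vanish_above_leaves:
  assumes "node_depth A y < H"
  shows "base_means (y, a) = 0" "j \<in> leaves A H \<Longrightarrow> raised_means j (y, a) = 0"
proof -
  have "(y, a) \<notin> leaves A H" using node_depth_leaf[OF H] assms by fastforce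
  then show "base_means (y, a) = 0" "j \<in> leaves A H \<Longrightarrow> raised_means j (y, a) = 0"
    using base_leaf_in_leaves by (auto simp: raised_means_def base_means_def)
qed

lemma reach_eq_integral:
  assumes "\<mu> \<in> policies A"
  shows "reach \<mu> = (\<integral>\<tau>. real (visits {base_leaf} \<tau>) \<partial>ep (tree_game H A X \<theta>) \<mu> H 0)"
proof -
  have "reach \<mu> = (\<integral>\<tau>. path_sum (\<lambda>i. if i \<in> {base_leaf} then 1 else 0) \<tau> \<partial>ep (tree_game H A X \<theta>) \<mu> H 0)"
    unfolding reach_def by (rule integral_path_sum[OF finite_set_pmf_policy[OF assms], symmetric])
  then show ?thesis by (simp only: path_sum_indicator) simp
qed

lemma val_le_of_path_sum_le:
  assumes \<mu>: "\<mu> \<in> policies A" and \<theta>: "\<And>i. 0 \<le> \<theta> i \<and> \<theta> i \<le> 1"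
    and le: "\<And>\<tau>. \<tau> \<in> set_pmf (ep (tree_game H A X \<theta>) \<mu> H 0) \<Longrightarrow>
      path_sum \<theta> \<tau> \<le> c + d * real (visits {base_leaf} \<tau>)"
  shows "val (tree_game H A X \<theta>) \<mu> \<le> c + d * reach \<mu>"
proof -
  let ?E = "ep (tree_game H A X \<theta>) \<mu> H 0"
  have fin: "finite (set_pmf ?E)"
    using \<mu> by (intro finite_set_ep_tree_game finite_set_pmf_policy)
  have "val (tree_game H A X \<theta>) \<mu> = (\<integral>\<tau>. path_sum \<theta> \<tau> \<partial>?E)" by (rule val_tree_game[OF \<mu> \<theta>])
  also have "\<dots> \<le> (\<integral>\<tau>. c + d * real (visits {base_leaf} \<tau>) \<partial>?E)"
    using le by (intro integral_mono_AE integrable_measure_pmf_finite[OF fin]) (simp add: AE_measure_pmf_iff)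
  also have "\<dots> = c + d * reach \<mu>"
    using reach_eq_integral[OF \<mu>, of \<theta>]
    by (simp add: Bochner_Integration.integral_add integrable_measure_pmf_finite[OF fin])
  finally show ?thesis .
qed

lemma val_le_1:
  assumes "\<mu> \<in> policies A" "\<And>i. 0 \<le> \<theta> i \<and> \<theta> i \<le> 1" "\<And>i. \<theta> i \<le> (if i \<in> leaves A H then 1 else 0)"
  shows "val (tree_game H A X \<theta>) \<mu> \<le> 1"
proof -
  have "path_sum \<theta> \<tau> \<le> 1 + 0 * real (visits {base_leaf} \<tau>)"
    if "\<tau> \<in> set_pmf (ep (tree_game H A X \<theta>) \<mu> H 0)" for \<tau>
  proof -
    have "path_sum \<theta> \<tau> \<le> path_sum (\<lambda>i. if i \<in> leaves A H then 1 else 0) \<tau>"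
      by (rule path_sum_mono) (rule assms(3))
    also have "\<dots> = real (visits (leaves A H) \<tau>)" by (simp only: path_sum_indicator)
    finally show ?thesis using visits_leaves_le_1[OF H assms(1) that] by simp
  qed
  then show ?thesis using val_le_of_path_sum_le[OF assms(1,2)] by fastforce
qed

lemma val_base_le:
  assumes \<mu>: "\<mu> \<in> policies A"
  shows "val (tree_game H A X base_means) \<mu> \<le> 1/2 + D * reach \<mu>"
proof (rule val_le_of_path_sum_le[OF \<mu> base_means_range])
  fix \<tau> assume "\<tau> \<in> set_pmf (ep (tree_game H A X base_means) \<mu> H 0)"
  then have "visits (leaves A H) \<tau> \<le> 1" by (rule visits_leaves_le_1[OF H \<mu>])
  moreover have "path_sum base_means \<tau> = 1/2 * real (visits (leaves A H) \<tau>) + D * real (visits {base_leaf} \<tau>)"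
    unfolding base_means_def by (simp only: path_sum_add path_sum_indicator)
  ultimately show "path_sum base_means \<tau> \<le> 1/2 + D * real (visits {base_leaf} \<tau>)" by simp
qed

lemma val_raised_le:
  assumes \<mu>: "\<mu> \<in> policies A" and j: "j \<in> leaves A H" "j \<noteq> base_leaf"
  shows "val (tree_game H A X (raised_means j)) \<mu> \<le> 1/2 + 2 * D - D * reach \<mu>"
proof (rule val_le_of_path_sum_le[OF \<mu> raised_means_range[OF j(2)], where d="- D", simplified])
  fix \<tau> assume "\<tau> \<in> set_pmf (ep (tree_game H A X (raised_means j)) \<mu> H 0)"
  then have one: "real (visits (leaves A H) \<tau>) \<le> 1" using visits_leaves_le_1[OF H \<mu>] by simp
  have "visits {base_leaf} \<tau> + visits {j} \<tau> = visits {base_leaf, j} \<tau>"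
    using sum_visits_singleton[of "{base_leaf, j}" \<tau>] j by simp
  also have "\<dots> \<le> visits (leaves A H) \<tau>" using j base_leaf_in_leaves by (intro visits_mono) auto
  finally have "real (visits {base_leaf} \<tau>) + real (visits {j} \<tau>) \<le> real (visits (leaves A H) \<tau>)"
    by linarith
  moreover have "path_sum (raised_means j) \<tau> = 1/2 * real (visits (leaves A H) \<tau>)
      + D * real (visits {base_leaf} \<tau>) + 2 * D * real (visits {j} \<tau>)"
    unfolding raised_means_def base_means_def by (simp only: path_sum_add path_sum_indicator)
  ultimately show "path_sum (raised_means j) \<tau> \<le> 1/2 + 2 * D - D * real (visits {base_leaf} \<tau>)"
    using one D mult_left_mono[OF one, of "1/2 + 2 * D"]
      mult_left_mono[of "real (visits {base_leaf} \<tau>) + real (visits {j} \<tau>)" "real (visits (leaves A H) \<tau>)" "2 * D"]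
    by (simp add: algebra_simps)
qed

lemma base_regret_ge:
  assumes alg: "\<And>hs. alg hs \<in> policies A"
  shows "D * (real T - total_reach alg T hs) \<le> regret (tree_game H A X base_means) alg T hs"
proof -
  let ?G = "tree_game H A X base_means"
  have "val ?G (path_policy A (replicate H 0)) = base_means base_leaf"
    unfolding base_leaf_def using base_path H A base_means_range means_vanish_above_leaves(1)
    by (intro val_path_policy) auto
  then have best: "val ?G (path_policy A (replicate H 0)) = 1/2 + D"
    using base_leaf_in_leaves by (simp add: base_means_def)
  have "D * (real T - total_reach alg T hs) = (\<Sum>t<T. (1/2 + D) - (1/2 + D * reach (alg (take t hs))))"
    by (simp add: total_reach_def sum_subtractf sum_distrib_left[symmetric] algebra_simps)
  also have "\<dots> \<le> (\<Sum>t<T. val ?G (path_policy A (replicate H 0)) - val ?G (alg (take t hs)))"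
    unfolding best using val_base_le[OF alg] by (intro sum_mono) (simp add: algebra_simps)
  also have "\<dots> \<le> regret ?G alg T hs"
    using path_policy_in_policies[of "replicate H 0" A] base_path A
      val_le_1[OF _ base_means_range base_means_le_leaves]
    by (intro regret_ge_sum) (auto simp: action_paths_def)
  finally show ?thesis .
qed

lemma raised_regret_ge:
  assumes alg: "\<And>hs. alg hs \<in> policies A" and j: "j \<in> leaves A H" "j \<noteq> base_leaf"
  shows "D * total_reach alg T hs \<le> regret (tree_game H A X (raised_means j)) alg T hs"
proof -
  let ?G = "tree_game H A X (raised_means j)"
  obtain p where p: "p \<in> action_paths A H" "j = leaf_of_path A p" using j(1) by (auto simp: leaves_def)
  have "val ?G (path_policy A p) = raised_means j j"
    unfolding p(2) using p(1) H A raised_means_range[OF j(2)] means_vanish_above_leaves(2)[OF _ j(1)]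
    by (intro val_path_policy) (auto simp: p(2)[symmetric])
  then have best: "val ?G (path_policy A p) = 1/2 + 2 * D"
    using j by (simp add: raised_means_def base_means_def)
  have "D * total_reach alg T hs = (\<Sum>t<T. (1/2 + 2 * D) - (1/2 + 2 * D - D * reach (alg (take t hs))))"
    by (simp add: total_reach_def sum_distrib_left)
  also have "\<dots> \<le> (\<Sum>t<T. val ?G (path_policy A p) - val ?G (alg (take t hs)))"
    unfolding best using val_raised_le[OF alg j] by (intro sum_mono) (simp add: algebra_simps)
  also have "\<dots> \<le> regret ?G alg T hs"
    using path_policy_in_policies[of p A] p(1) A val_le_1[OF _ raised_means_range[OF j(2)]] raised_means_le_leaves[OF j]
    by (intro regret_ge_sum) (auto simp: action_paths_def)
  finally show ?thesis .
qed

lemma bernoulli_sq_le: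
  assumes j: "j \<in> leaves A H" "j \<noteq> base_leaf"
  shows "(pmf (bernoulli_reward (base_means i)) r)\<^sup>2 \<le> (1 / (1 - 16 * D\<^sup>2)) ^ (if i = j then 1 else 0)
    * pmf (bernoulli_reward (raised_means j i)) r * pmf (bernoulli_reward (lowered_means j i)) r"
proof (cases "i = j")
  case False
  then show ?thesis by (simp add: raised_means_def lowered_means_def power2_eq_square)
next
  case True
  define \<rho> where "\<rho> = 1 / (1 - 16 * D\<^sup>2)"
  have "16 * D\<^sup>2 < 1" using D mult_mono[OF D(2) D(2)] by (simp add: power2_eq_square)
  then have key: "(1/2)\<^sup>2 = \<rho> * (1/2 + 2 * D) * (1/2 - 2 * D)" "(1/2)\<^sup>2 = \<rho> * (1/2 - 2 * D) * (1/2 + 2 * D)"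
    by (simp_all add: \<rho>_def field_simps power2_eq_square)
  have "base_means j = 1/2" "raised_means j j = 1/2 + 2 * D" "lowered_means j j = 1/2 - 2 * D"
    using j by (auto simp: base_means_def raised_means_def lowered_means_def)
  then have "pmf (bernoulli_reward (base_means j)) r = (if r = 1 then 1/2 else if r = 0 then 1/2 else 0)"
    "pmf (bernoulli_reward (raised_means j j)) r = (if r = 1 then 1/2 + 2 * D else if r = 0 then 1/2 - 2 * D else 0)"
    "pmf (bernoulli_reward (lowered_means j j)) r = (if r = 1 then 1/2 - 2 * D else if r = 0 then 1/2 + 2 * D else 0)"
    using D by (simp_all add: pmf_bernoulli_reward)
  then show ?thesis unfolding True \<rho>_def[symmetric] using key by auto
qed

lemma visits_leaves_hist_le_1:
  assumes alg: "\<And>hs. alg hs \<in> policies A" and z: "z \<in> set_pmf (hist (tree_game H A X \<theta>) alg T)"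
    and \<tau>: "\<tau> \<in> set z"
  shows "visits (leaves A H) \<tau> \<le> 1"
proof -
  obtain k where "k < length z" "\<tau> = z ! k" using \<tau> by (auto simp: in_set_conv_nth)
  then have "\<tau> \<in> set_pmf (ep (tree_game H A X \<theta>) (alg (take k z)) H 0)"
    using set_pmf_hist[OF z] by (simp add: episode_tree_game)
  then show ?thesis by (rule visits_leaves_le_1[OF H alg])
qed

text \<open>Pigeonhole: a history visits the leaves at most \<open>T\<close> times in total.\<close>
lemma rarely_visited_leaf:
  assumes alg: "\<And>hs. alg hs \<in> policies A" and m: "4 * real T < (real m + 1) * (real A ^ H - 1)"
  shows "\<exists>i\<in>leaves A H - {base_leaf}.
    measure_pmf.prob (hist (tree_game H A X \<theta>) alg T) {hs. m < hist_visits i hs} < 1/4"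
proof -
  let ?P = "hist (tree_game H A X \<theta>) alg T"
  let ?I = "leaves A H - {base_leaf}"
  have finI: "finite ?I" using finite_leaves by simp
  have "A ^ 1 \<le> A ^ H" using A H by (intro power_increasing) auto
  then have card: "real (card ?I) = real A ^ H - 1"
    using base_leaf_in_leaves card_leaves[OF H] finite_leaves A by (simp add: of_nat_diff)
  moreover have "(2::real) \<le> real A ^ H" using \<open>A ^ 1 \<le> A ^ H\<close> A by (simp flip: of_nat_power)
  ultimately have "?I \<noteq> {}" by (intro notI) simp
  have "(\<Sum>i\<in>?I. measure_pmf.prob ?P {hs. m < hist_visits i hs}) \<le> real T / (real m + 1)"
  proof (rule sum_prob_le[OF finite_set_pmf_hist_tree_game[OF alg] finI])
    fix z assume z: "z \<in> set_pmf ?P"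
    have "(\<Sum>i\<in>?I. hist_visits i z) = sum_list (map (visits ?I) z)" by (rule sum_hist_visits[OF finI])
    also have "\<dots> \<le> sum_list (map (\<lambda>_. 1) z)"
    proof (rule sum_list_mono)
      fix \<tau> assume "\<tau> \<in> set z"
      then have "visits (leaves A H) \<tau> \<le> 1" by (rule visits_leaves_hist_le_1[OF alg z])
      then show "visits ?I \<tau> \<le> 1" using visits_mono[of ?I "leaves A H" \<tau>] by simp
    qed
    also have "\<dots> = T" using set_pmf_hist(1)[OF z] by (simp add: sum_list_triv)
    finally have visits_le: "real (\<Sum>i\<in>?I. hist_visits i z) \<le> real T" by (simp only: of_nat_le_iff)
    have "(\<Sum>i\<in>?I. indicator {hs. m < hist_visits i hs} z) \<le> (\<Sum>i\<in>?I. real (hist_visits i z) / (real m + 1))"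
      by (intro sum_mono) (simp add: indicator_def field_simps)
    also have "\<dots> = real (\<Sum>i\<in>?I. hist_visits i z) / (real m + 1)"
      by (simp add: sum_divide_distrib)
    also have "\<dots> \<le> real T / (real m + 1)" using visits_le by (intro divide_right_mono) auto
    finally show "(\<Sum>i\<in>?I. indicator {hs. m < hist_visits i hs} z) \<le> real T / (real m + 1)" .
  qed
  then obtain i where "i \<in> ?I"
    and "measure_pmf.prob ?P {hs. m < hist_visits i hs} \<le> real T / (real m + 1) / real (card ?I)"
    using exists_le_average[OF finI \<open>?I \<noteq> {}\<close>] by blast
  moreover have "real T / (real m + 1) / real (card ?I) < 1/4"
    using m card \<open>2 \<le> real A ^ H\<close> by (simp add: pos_divide_less_eq)
  ultimately show ?thesis by (meson order_le_less_trans)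
qed

lemma prob_raised_ge:
  assumes alg: "\<And>hs. alg hs \<in> policies A" and j: "j \<in> leaves A H" "j \<noteq> base_leaf"
    and F: "\<And>hs. hs \<in> F \<Longrightarrow> hist_visits j hs \<le> m"
  shows "(measure_pmf.prob (hist (tree_game H A X base_means) alg T) F)\<^sup>2 * (1 - 16 * D\<^sup>2) ^ m
    \<le> measure_pmf.prob (hist (tree_game H A X (raised_means j)) alg T) F"
proof -
  define \<rho> where "\<rho> = 1 / (1 - 16 * D\<^sup>2)"
  have pos: "0 < 1 - 16 * D\<^sup>2" using D mult_mono[OF D(2) D(2)] by (simp add: power2_eq_square)
  then have \<rho>: "1 \<le> \<rho>" by (simp add: \<rho>_def)
  have "(measure_pmf.prob (hist (tree_game H A X base_means) alg T) F)\<^sup>2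
      \<le> \<rho> ^ m * measure_pmf.prob (hist (tree_game H A X (raised_means j)) alg T) F"
    using \<rho> F pmf_hist_tree_game_sq_le[OF bernoulli_sq_le[OF j, folded \<rho>_def]]
    by (intro prob_sq_le_of_pmf_sq_le[where N="hist_visits j" and Q'="hist (tree_game H A X (lowered_means j)) alg T"]
        finite_set_pmf_hist_tree_game[OF alg]) auto
  then show ?thesis
    using pos by (simp add: \<rho>_def power_divide field_simps)
qed

lemma hard_instance_exists:
  assumes alg: "\<And>hs. alg hs \<in> policies A" and \<delta>: "0 < \<delta>" "\<delta> < 1/4"
    and m: "4 * real T < (real m + 1) * (real A ^ H - 1)" "4 * \<delta> \<le> (1 - 16 * D\<^sup>2) ^ m"
  shows "\<exists>\<theta>. (\<forall>i. 0 \<le> \<theta> i \<and> \<theta> i \<le> 1) \<and>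
    \<delta> < measure_pmf.prob (hist (tree_game H A X \<theta>) alg T) {hs. D * real T / 2 \<le> regret (tree_game H A X \<theta>) alg T hs}"
proof -
  let ?P = "\<lambda>\<theta>. hist (tree_game H A X \<theta>) alg T"
  let ?large = "\<lambda>\<theta>. {hs. D * real T / 2 \<le> regret (tree_game H A X \<theta>) alg T hs}"
  define E where "E = {hs. total_reach alg T hs \<le> real T / 2}"
  have "E \<subseteq> ?large base_means"
  proof
    fix hs assume "hs \<in> E"
    then have "D * (real T / 2) \<le> D * (real T - total_reach alg T hs)"
      using D by (intro mult_left_mono) (auto simp: E_def)
    then show "hs \<in> ?large base_means" using base_regret_ge[where alg=alg and T=T and hs=hs, OF alg] by simp
  qed
  then have base: "measure_pmf.prob (?P base_means) E \<le> measure_pmf.prob (?P base_means) (?large base_means)"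
    by (rule measure_pmf.finite_measure_mono) simp
  show ?thesis
  proof (cases "\<delta> < measure_pmf.prob (?P base_means) E")
    case True
    then show ?thesis using base base_means_range by (intro exI[of _ base_means]) auto
  next
    case False
    obtain j where j: "j \<in> leaves A H" "j \<noteq> base_leaf"
      and rare: "measure_pmf.prob (?P base_means) {hs. m < hist_visits j hs} < 1/4"
      using rarely_visited_leaf[where alg=alg, OF alg m(1)] by blast
    define F where "F = - E - {hs. m < hist_visits j hs}"
    have "1 - \<delta> \<le> measure_pmf.prob (?P base_means) (F \<union> {hs. m < hist_visits j hs})"
      using False measure_pmf.prob_compl[of E "?P base_means"]
        measure_pmf.finite_measure_mono[of "- E" "F \<union> {hs. m < hist_visits j hs}" "?P base_means"]
      by (auto simp: F_def Compl_eq_Diff_UNIV)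
    then have "1/2 < measure_pmf.prob (?P base_means) F"
      using rare \<delta> measure_Un_le[of F "?P base_means" "{hs. m < hist_visits j hs}"]
      by simp
    then have "(1/2)\<^sup>2 < (measure_pmf.prob (?P base_means) F)\<^sup>2" by (intro power_strict_mono) auto
    then have "1/4 * (4 * \<delta>) < (measure_pmf.prob (?P base_means) F)\<^sup>2 * (1 - 16 * D\<^sup>2) ^ m"
      using m(2) \<delta> by (intro mult_less_le_imp_less) (auto simp: power2_eq_square)
    also have "\<dots> \<le> measure_pmf.prob (?P (raised_means j)) F"
      by (rule prob_raised_ge[where alg=alg, OF alg j]) (simp add: F_def)
    also have "\<dots> \<le> measure_pmf.prob (?P (raised_means j)) (?large (raised_means j))"
    proof (rule measure_pmf.finite_measure_mono)
      show "F \<subseteq> ?large (raised_means j)"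
      proof
        fix hs assume "hs \<in> F"
        then have "D * (real T / 2) \<le> D * total_reach alg T hs"
          using D by (intro mult_left_mono) (auto simp: F_def E_def)
        then show "hs \<in> ?large (raised_means j)" using raised_regret_ge[where alg=alg and T=T and hs=hs, OF alg j] by simp
      qed
    qed simp
    finally show ?thesis using raised_means_range[OF j(2)] by (intro exI[of _ "raised_means j"]) auto
  qed
qed

end

lemma infoset_count_bounds:
  assumes A: "2 \<le> A" and X: "(real A ^ H - 1) / (real A - 1) \<le> real X"
    "real X < 2 * (real A ^ H - 1) / (real A - 1)"
  shows "1 \<le> H" "tree_size A H \<le> X" "real A * real X \<le> 4 * real A ^ H"
proof -
  show "1 \<le> H" using X by (cases H) auto
  have "real (tree_size A H) \<le> real X" using X(1) real_tree_size[OF A, of H] by linarith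
  then show "tree_size A H \<le> X" by simp
  have A1: "0 < real A - 1" using A by simp
  have "real X * (real A - 1) < 2 * (real A ^ H - 1)" using X(2) A1 by (simp add: pos_less_divide_eq)
  moreover have "2 * (real A ^ H - 1) / (real A - 1) \<le> 2 * (real A ^ H - 1)"
  proof -
    have "1 \<le> real A ^ H" using A by simp
    then have "2 * (real A ^ H - 1) * 1 \<le> 2 * (real A ^ H - 1) * (real A - 1)"
      using A by (intro mult_left_mono) auto
    then show ?thesis unfolding pos_divide_le_eq[OF A1] by simp
  qed
  ultimately show "real A * real X \<le> 4 * real A ^ H" using X(2) by (simp add: algebra_simps)
qed

lemma hard_game_exists:
  assumes A: "2 \<le> A" and H: "1 \<le> H" and X: "tree_size A H \<le> X" "real A * real X \<le> 4 * real A ^ H"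
    and \<delta>: "0 < \<delta>" "\<delta> < 1/4" and T: "0.4 * (2 * real A ^ H) * ln (1 / (4 * \<delta>)) \<le> real T"
    and alg: "\<And>hs. alg hs \<in> policies A"
  shows "\<exists>G. wf_game G \<and> hor G = H \<and> nact G = A \<and> card (infs G) = X \<and>
    \<delta> < measure_pmf.prob (hist G alg T)
      {hs. 1/64 * sqrt (real T * (real A * real X) * ln (1 / (4 * \<delta>))) \<le> regret G alg T hs}"
proof -
  define L where "L = ln (1 / (4 * \<delta>))"
  define K where "K = real A ^ H"
  define D where "D = min (1/8) (sqrt (L * (K - 1) / (128 * real T)))"
  have L: "0 < L" using \<delta> by (simp add: L_def)
  have "2 \<le> real A" using A by simp
  moreover have "real A \<le> real A ^ H" using power_increasing[of 1 H "real A"] A H by simp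
  ultimately have K: "2 \<le> K" unfolding K_def by linarith
  have "0 < 0.4 * (2 * K) * L" using K L by simp
  then have T0: "0 < real T" using T by (simp add: K_def L_def)
  have D: "0 \<le> D" "D \<le> 1/8" using L K T0 by (simp_all add: D_def)
  have "D\<^sup>2 \<le> (sqrt (L * (K - 1) / (128 * real T)))\<^sup>2" using D by (intro power_mono) (simp_all add: D_def)
  then have "D\<^sup>2 \<le> L * (K - 1) / (128 * real T)" using L K T0 by simp
  then obtain m where m: "4 * real T < (real m + 1) * (K - 1)" "exp (- L) \<le> (1 - 16 * D\<^sup>2) ^ m"
    using exists_visit_budget[OF T0 K D] by blast
  have "exp (- L) = 4 * \<delta>" using \<delta> by (simp add: L_def ln_div)
  interpret hard_instances A H X D using A H D by unfold_locales
  obtain \<theta> where \<theta>: "\<delta> < measure_pmf.prob (hist (tree_game H A X \<theta>) alg T)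
      {hs. D * real T / 2 \<le> regret (tree_game H A X \<theta>) alg T hs}"
    using hard_instance_exists[where alg=alg, OF alg \<delta> m(1)[unfolded K_def]] m(2) \<open>exp (- L) = 4 * \<delta>\<close>
    by auto
  have "1/64 * sqrt (real T * (real A * real X) * L) \<le> D * real T / 2"
    unfolding D_def using gap_scale_ge[OF K T0 L _ X(2)[folded K_def]] T by (simp add: K_def L_def)
  then have "{hs. D * real T / 2 \<le> regret (tree_game H A X \<theta>) alg T hs}
      \<subseteq> {hs. 1/64 * sqrt (real T * (real A * real X) * L) \<le> regret (tree_game H A X \<theta>) alg T hs}"
    by auto
  then have "measure_pmf.prob (hist (tree_game H A X \<theta>) alg T)
      {hs. D * real T / 2 \<le> regret (tree_game H A X \<theta>) alg T hs}
    \<le> measure_pmf.prob (hist (tree_game H A X \<theta>) alg T)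
      {hs. 1/64 * sqrt (real T * (real A * real X) * L) \<le> regret (tree_game H A X \<theta>) alg T hs}"
    by (rule measure_pmf.finite_measure_mono) simp
  with \<theta> have "\<delta> < measure_pmf.prob (hist (tree_game H A X \<theta>) alg T)
      {hs. 1/64 * sqrt (real T * (real A * real X) * L) \<le> regret (tree_game H A X \<theta>) alg T hs}"
    by linarith
  then show ?thesis using wf_tree_game[OF A H X(1)] unfolding L_def by (intro exI[of _ "tree_game H A X \<theta>"]) simp
qed

theorem mainTheorem13:
  "\<exists>c>0. \<forall>(H::nat) (T::nat) (A::nat) (X::nat) (\<delta>::real) (alg::algorithm).
     A \<ge> 2 \<longrightarrow>
     (real A ^ H - 1) / (real A - 1) \<le> real X \<longrightarrow>
     real X < 2 * (real A ^ H - 1) / (real A - 1) \<longrightarrow>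
     0 < \<delta> \<longrightarrow> \<delta> < 1/4 \<longrightarrow>
     real T \<ge> 0.4 * (2 * real A ^ H) * ln (1 / (4 * \<delta>)) \<longrightarrow>
     (\<forall>hs x. set_pmf (alg hs x) \<subseteq> {..<A}) \<longrightarrow>
     (\<exists>G. wf_game G \<and> hor G = H \<and> nact G = A \<and> card (infs G) = X \<and>
        measure_pmf.prob (hist G alg T)
          {hs. regret G alg T hs \<ge> c * sqrt (real T * (real A * real X) * ln (1 / (4 * \<delta>)))}
        > \<delta>)"
proof (intro exI[of _ "1/64"] conjI allI impI)
  fix H T A X :: nat and \<delta> :: real and alg :: algorithm
  assume A: "A \<ge> 2" and X: "(real A ^ H - 1) / (real A - 1) \<le> real X"
    "real X < 2 * (real A ^ H - 1) / (real A - 1)"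
    and \<delta>: "0 < \<delta>" "\<delta> < 1/4" and T: "real T \<ge> 0.4 * (2 * real A ^ H) * ln (1 / (4 * \<delta>))"
    and alg: "\<forall>hs x. set_pmf (alg hs x) \<subseteq> {..<A}"
  have "\<And>hs. alg hs \<in> policies A" using alg by (simp add: policies_def)
  from hard_game_exists[OF A infoset_count_bounds[OF A X] \<delta> T this]
  show "\<exists>G. wf_game G \<and> hor G = H \<and> nact G = A \<and> card (infs G) = X \<and>
      measure_pmf.prob (hist G alg T)
        {hs. regret G alg T hs \<ge> 1/64 * sqrt (real T * (real A * real X) * ln (1 / (4 * \<delta>)))} > \<delta>"
    by simp
qed simp

end
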